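(* Let $A=\{a_1,\dots,a_s\}$ and $B=\{b_1,\dots,b_t\}$ with costs $\delta(a_i,b_j)$, demands/capacities $\alpha_i\le\alpha'_i$ and $\beta_j\le\beta'_j\le s$, with $\sum_{i=1}^s\alpha'_i>\sum_{j=1}^t\beta_j$. Let $G$ be the weighted bipartite graph constructed as in the context, let $M$ be a minimum weight perfect matching in $G$, and let $L$ be a minimum-cost MMDC between $A$ and $B$. Then $c(L)\le Weight(Main(M))$.
   Context: A many-to-many matching with demands and capacities (MMDC) between $A$ and $B$ is a set $L\subseteq A\times B$ of pairs such that each $a_i$ occurs in at least $\alpha_i$ and at most $\alpha'_i$ pairs of $L$, and each $b_j$ occurs in at least $\beta_j$ and at most $\beta'_j$ pairs of $L$. Its cost is $c(L)=\sum_{(a_i,b_j)\in L}\delta(a_i,b_j)$; a minimum-cost MMDC is one of least cost. Construction of $G=(S\cup T,E)$. Let $\gamma=\max_{i,j}\delta(a_i,b_j)$ and fix numbers $\gamma',\gamma''$ with $\gamma<\gamma'<\gamma''$. The side $S$ consists of pairwise disjoint sets: for each $1\le i\le s$, $A_i=\{a_{i1},\dots,a_{i\alpha_i}\}$ and $A'_i=\{a'_{i1},\dots,a'_{i(\alpha'_i-\alpha_i)}\}$; for each $1\le j\le t$, $X_j=\{x_{j1},\dots,x_{j(\beta'_j-\beta_j)}\}$ and $W_j=\{w_{j1},\dots,w_{j(s-\beta'_j)}\}$. The side $T$ consists of the vertices $b_{ji}$ ($1\le i\le s$, $1\le j\le t$) together with a set $Y$ of $\sum_i\alpha'_i-\sum_j\beta_j$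 vertices. Write $Bset_i=\{b_{1i},\dots,b_{ti}\}$ and $B_j=\{b_{j1},\dots,b_{js}\}$. The edges are: every vertex of $A_i\cup A'_i$ is joined to every $b_{ji}\in Bset_i$ with weight $\delta(a_i,b_j)$; every vertex of $W_j$ is joined to every vertex of $B_j$ with weight $0$; every vertex of $X_j$ is joined to every vertex of $B_j$ with weight $\gamma'$; every vertex of $X_j$ is joined to every vertex of $Y$ with weight $\gamma''$; every vertex of $A'_i$ is joined to every vertex of $Y$ with weight $\gamma'$. The weight of a set of edges is the sum of their weights. The main edges are the edges between $A_i\cup A'_i$ and $Bset_i$ ($1\le i\le s$); for a matching $M$ in $G$, $Main(M)$ denotes the set of main edges of $M$. *)

theory Defs
  imports Complex_Main
begin

text \<open>Indices are 0-based: a_i for i < s, b_j for j < t.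
  Vertices of the auxiliary graph G:
  VA i k   = a_{i,k+1}  (k < alpha i),
  VA' i k  = a'_{i,k+1} (k < alpha' i - alpha i),
  VX j k   = x_{j,k+1}  (k < beta' j - beta j),
  VW j k   = w_{j,k+1}  (k < s - beta' j),
  VB j i   = b_{j i}    (j < t, i < s),
  VY l     = l-th vertex of Y  (l < sum alpha' - sum beta).\<close>

datatype vert = VA nat nat | VA' nat nat | VX nat nat | VW nat nat | VB nat nat | VY nat

definition is_mmdc ::
  "nat \<Rightarrow> nat \<Rightarrow> (nat \<Rightarrow> nat) \<Rightarrow> (nat \<Rightarrow> nat) \<Rightarrow> (nat \<Rightarrow> nat) \<Rightarrow> (nat \<Rightarrow> nat)
   \<Rightarrow> (nat \<times> nat) set \<Rightarrow> bool" where
  "is_mmdc s t alpha alpha' beta beta' L \<longleftrightarrow>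
     L \<subseteq> {0..<s} \<times> {0..<t} \<and>
     (\<forall>i<s. alpha i \<le> card {j. (i, j) \<in> L} \<and> card {j. (i, j) \<in> L} \<le> alpha' i) \<and>
     (\<forall>j<t. beta j \<le> card {i. (i, j) \<in> L} \<and> card {i. (i, j) \<in> L} \<le> beta' j)"

definition mmdc_cost :: "(nat \<Rightarrow> nat \<Rightarrow> real) \<Rightarrow> (nat \<times> nat) set \<Rightarrow> real" where
  "mmdc_cost delta L = (\<Sum>(i, j)\<in>L. delta i j)"

definition is_min_mmdc ::
  "nat \<Rightarrow> nat \<Rightarrow> (nat \<Rightarrow> nat \<Rightarrow> real) \<Rightarrow> (nat \<Rightarrow> nat) \<Rightarrow> (nat \<Rightarrow> nat) \<Rightarrow> (nat \<Rightarrow> nat)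
   \<Rightarrow> (nat \<Rightarrow> nat) \<Rightarrow> (nat \<times> nat) set \<Rightarrow> bool" where
  "is_min_mmdc s t delta alpha alpha' beta beta' L \<longleftrightarrow>
     is_mmdc s t alpha alpha' beta beta' L \<and>
     (\<forall>L'. is_mmdc s t alpha alpha' beta beta' L' \<longrightarrow> mmdc_cost delta L \<le> mmdc_cost delta L')"

definition Sside ::
  "nat \<Rightarrow> nat \<Rightarrow> (nat \<Rightarrow> nat) \<Rightarrow> (nat \<Rightarrow> nat) \<Rightarrow> (nat \<Rightarrow> nat) \<Rightarrow> (nat \<Rightarrow> nat) \<Rightarrow> vert set" where
  "Sside s t alpha alpha' beta beta' =
     {VA i k | i k. i < s \<and> k < alpha i}
   \<union> {VA' i k | i k. i < s \<and> k < alpha' i - alpha i}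
   \<union> {VX j k | j k. j < t \<and> k < beta' j - beta j}
   \<union> {VW j k | j k. j < t \<and> k < s - beta' j}"

definition Tside ::
  "nat \<Rightarrow> nat \<Rightarrow> (nat \<Rightarrow> nat) \<Rightarrow> (nat \<Rightarrow> nat) \<Rightarrow> vert set" where
  "Tside s t alpha' beta =
     {VB j i | j i. j < t \<and> i < s}
   \<union> {VY l | l. l < (\<Sum>i<s. alpha' i) - (\<Sum>j<t. beta j)}"

fun adj :: "vert \<Rightarrow> vert \<Rightarrow> bool" where
  "adj (VA i k) (VB j i') = (i = i')"
| "adj (VA' i k) (VB j i') = (i = i')"
| "adj (VA' i k) (VY l) = True"
| "adj (VW j k) (VB j' i) = (j = j')"
| "adj (VX j k) (VB j' i) = (j = j')"
| "adj (VX j k) (VY l) = True"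
| "adj _ _ = False"

text \<open>Edge weights (gamma1 = gamma', gamma2 = gamma'').\<close>
fun wt :: "(nat \<Rightarrow> nat \<Rightarrow> real) \<Rightarrow> real \<Rightarrow> real \<Rightarrow> vert \<Rightarrow> vert \<Rightarrow> real" where
  "wt delta g1 g2 (VA i k) (VB j i') = delta i j"
| "wt delta g1 g2 (VA' i k) (VB j i') = delta i j"
| "wt delta g1 g2 (VA' i k) (VY l) = g1"
| "wt delta g1 g2 (VW j k) (VB j' i) = 0"
| "wt delta g1 g2 (VX j k) (VB j' i) = g1"
| "wt delta g1 g2 (VX j k) (VY l) = g2"
| "wt delta g1 g2 _ _ = 0"

fun is_main :: "vert \<Rightarrow> vert \<Rightarrow> bool" where
  "is_main (VA i k) (VB j i') = (i = i')"
| "is_main (VA' i k) (VB j i') = (i = i')"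
| "is_main _ _ = False"

definition Gedges ::
  "nat \<Rightarrow> nat \<Rightarrow> (nat \<Rightarrow> nat) \<Rightarrow> (nat \<Rightarrow> nat) \<Rightarrow> (nat \<Rightarrow> nat) \<Rightarrow> (nat \<Rightarrow> nat) \<Rightarrow> (vert \<times> vert) set" where
  "Gedges s t alpha alpha' beta beta' =
     {(u, v). u \<in> Sside s t alpha alpha' beta beta' \<and> v \<in> Tside s t alpha' beta \<and> adj u v}"

definition Main_edges :: "(vert \<times> vert) set \<Rightarrow> (vert \<times> vert) set" where
  "Main_edges M = {e \<in> M. is_main (fst e) (snd e)}"

definition Gweight :: "(nat \<Rightarrow> nat \<Rightarrow> real) \<Rightarrow> real \<Rightarrow> real \<Rightarrow> (vert \<times> vert) set \<Rightarrow> real" where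
  "Gweight delta g1 g2 F = (\<Sum>(u, v)\<in>F. wt delta g1 g2 u v)"

definition is_perfect_matching ::
  "nat \<Rightarrow> nat \<Rightarrow> (nat \<Rightarrow> nat) \<Rightarrow> (nat \<Rightarrow> nat) \<Rightarrow> (nat \<Rightarrow> nat) \<Rightarrow> (nat \<Rightarrow> nat)
   \<Rightarrow> (vert \<times> vert) set \<Rightarrow> bool" where
  "is_perfect_matching s t alpha alpha' beta beta' M \<longleftrightarrow>
     M \<subseteq> Gedges s t alpha alpha' beta beta' \<and>
     (\<forall>e\<in>M. \<forall>e'\<in>M. e \<noteq> e' \<longrightarrow> fst e \<noteq> fst e' \<and> snd e \<noteq> snd e') \<and>
     (\<forall>u\<in>Sside s t alpha alpha' beta beta'. \<exists>v. (u, v) \<in> M) \<and>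
     (\<forall>v\<in>Tside s t alpha' beta. \<exists>u. (u, v) \<in> M)"

definition is_min_weight_perfect_matching ::
  "nat \<Rightarrow> nat \<Rightarrow> (nat \<Rightarrow> nat \<Rightarrow> real) \<Rightarrow> real \<Rightarrow> real \<Rightarrow> (nat \<Rightarrow> nat) \<Rightarrow> (nat \<Rightarrow> nat)
   \<Rightarrow> (nat \<Rightarrow> nat) \<Rightarrow> (nat \<Rightarrow> nat) \<Rightarrow> (vert \<times> vert) set \<Rightarrow> bool" where
  "is_min_weight_perfect_matching s t delta g1 g2 alpha alpha' beta beta' M \<longleftrightarrow>
     is_perfect_matching s t alpha alpha' beta beta' M \<and>
     (\<forall>M'. is_perfect_matching s t alpha alpha' beta beta' M' \<longrightarrow>
        Gweight delta g1 g2 M \<le> Gweight delta g1 g2 M')"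

end

theory Submission
  imports Defs
begin

text \<open>The main edges of any perfect matching M of G encode an MMDC
  L_M = {(a_i, b_j) | b_ji is covered by a main edge of M} whose cost is Weight(Main(M)).
  For the degree of a_i: every vertex of A_i is adjacent only to Bset_i, so it is matched by a
  main edge, which gives at least alpha_i of them; and the main edges at Bset_i all come from
  the alpha'_i vertices of A_i \<union> A'_i. For the degree of b_j: the copies b_ji not covered by
  a main edge are matched into W_j \<union> X_j, which has s - beta_j vertices, and every vertex of
  W_j is matched to such a copy, so there are at least s - beta'_j of them.
  Minimality of L then gives c(L) \<le> c(L_M) = Weight(Main(M)).\<close>

lemma card_le_card_if_left_unique:
  assumes "finite B"
    and total: "\<And>x. x \<in> A \<Longrightarrow> \<exists>y\<in>B. (x, y) \<in> R"
    and left_unique: "\<And>x x' y. (x, y) \<in> R \<Longrightarrow> (x', y) \<in> R \<Longrightarrow> x = x'"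
  shows "card A \<le> card B"
proof -
  obtain f where f: "\<And>x. x \<in> A \<Longrightarrow> f x \<in> B \<and> (x, f x) \<in> R"
    using total by metis
  have "inj_on f A"
    by (rule inj_onI) (metis f left_unique)
  with f show ?thesis
    by (intro card_inj_on_le[OF _ _ \<open>finite B\<close>]) auto
qed

lemma mem_Sside_iff [simp]:
  "VA i k \<in> Sside s t alpha alpha' beta beta' \<longleftrightarrow> i < s \<and> k < alpha i"
  "VA' i k \<in> Sside s t alpha alpha' beta beta' \<longleftrightarrow> i < s \<and> k < alpha' i - alpha i"
  "VX j k \<in> Sside s t alpha alpha' beta beta' \<longleftrightarrow> j < t \<and> k < beta' j - beta j"
  "VW j k \<in> Sside s t alpha alpha' beta beta' \<longleftrightarrow> j < t \<and> k < s - beta' j"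
  by (auto simp: Sside_def)

lemma VB_mem_Tside_iff [simp]: "VB j i \<in> Tside s t alpha' beta \<longleftrightarrow> j < t \<and> i < s"
  by (auto simp: Tside_def)

lemma is_main_VB_iff: "is_main u (VB j i) \<longleftrightarrow> (\<exists>k. u = VA i k \<or> u = VA' i k)"
  by (cases u) auto

lemma is_main_imp_VB: "is_main u v \<Longrightarrow> \<exists>j i. v = VB j i"
  by (cases u; cases v) auto

lemma adj_VB_not_main:
  "adj u (VB j i) \<Longrightarrow> \<not> is_main u (VB j i) \<Longrightarrow> \<exists>k. u = VW j k \<or> u = VX j k"
  by (cases u) auto

lemma adj_VA_imp: "adj (VA i k) v \<Longrightarrow> \<exists>j. v = VB j i"
  by (cases v) auto

lemma adj_VW_imp: "adj (VW j k) v \<Longrightarrow> \<exists>i. v = VB j i"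
  by (cases v) auto

lemma wt_main: "is_main u (VB j i) \<Longrightarrow> wt delta g1 g2 u (VB j i) = delta i j"
  by (cases u) auto

lemma card_two_blocks:
  assumes "inj C" "inj D" "\<And>k l. C k \<noteq> D l"
  shows "card (C ` {..<a} \<union> D ` {..<b}) = a + b"
  using assms by (subst card_Un_disjoint) (auto simp: card_image inj_on_subset)

definition B_index :: "vert \<Rightarrow> nat \<times> nat" where
  "B_index v = (case v of VB j i \<Rightarrow> (i, j) | _ \<Rightarrow> (0, 0))"

definition mmdc_of_matching :: "(vert \<times> vert) set \<Rightarrow> (nat \<times> nat) set" where
  "mmdc_of_matching M = {(i, j). \<exists>u. (u, VB j i) \<in> Main_edges M}"

lemma mmdc_of_matching_eq_image:
  "mmdc_of_matching M = (\<lambda>e. B_index (snd e)) ` Main_edges M"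
proof (intro set_eqI iffI)
  fix p assume "p \<in> (\<lambda>e. B_index (snd e)) ` Main_edges M"
  then obtain u v where "(u, v) \<in> Main_edges M" "p = B_index v"
    by auto
  then show "p \<in> mmdc_of_matching M"
    using is_main_imp_VB[of u v] by (auto simp: Main_edges_def mmdc_of_matching_def B_index_def)
qed (force simp: mmdc_of_matching_def B_index_def)

lemma mmdc_cost_mmdc_of_matching:
  assumes "\<And>u u' v. (u, v) \<in> M \<Longrightarrow> (u', v) \<in> M \<Longrightarrow> u = u'"
  shows "mmdc_cost delta (mmdc_of_matching M) = Gweight delta g1 g2 (Main_edges M)"
proof -
  have main_VB: "\<exists>j i. snd e = VB j i \<and> is_main (fst e) (VB j i) \<and> e \<in> M"
    if "e \<in> Main_edges M" for e
    using that is_main_imp_VB by (fastforce simp: Main_edges_def)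
  have "inj_on (\<lambda>e. B_index (snd e)) (Main_edges M)"
  proof (rule inj_onI)
    fix e e' assume e: "e \<in> Main_edges M" and e': "e' \<in> Main_edges M"
      and same_index: "B_index (snd e) = B_index (snd e')"
    from main_VB[OF e] main_VB[OF e'] same_index have "snd e = snd e'" "e \<in> M" "e' \<in> M"
      by (auto simp: B_index_def)
    then show "e = e'"
      using assms by (metis prod.collapse)
  qed
  then have "mmdc_cost delta (mmdc_of_matching M)
      = (\<Sum>e\<in>Main_edges M. case B_index (snd e) of (i, j) \<Rightarrow> delta i j)"
    by (simp add: mmdc_of_matching_eq_image mmdc_cost_def sum.reindex)
  also have "\<dots> = Gweight delta g1 g2 (Main_edges M)"
    unfolding Gweight_def
    by (rule sum.cong) (auto simp: B_index_def wt_main dest!: main_VB)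
  finally show ?thesis .
qed

locale G_perfect_matching =
  fixes s t :: nat and alpha alpha' beta beta' :: "nat \<Rightarrow> nat" and M :: "(vert \<times> vert) set"
  assumes perfect: "is_perfect_matching s t alpha alpha' beta beta' M"
begin

abbreviation "L\<^sub>M \<equiv> mmdc_of_matching M"

lemma edge_in_G:
  "(u, v) \<in> M \<Longrightarrow> u \<in> Sside s t alpha alpha' beta beta' \<and> v \<in> Tside s t alpha' beta \<and> adj u v"
  using perfect by (auto simp: is_perfect_matching_def Gedges_def)

lemma left_unique: "(u, v) \<in> M \<Longrightarrow> (u', v) \<in> M \<Longrightarrow> u = u'"
  using perfect unfolding is_perfect_matching_def by (metis fst_conv snd_conv)

lemma right_unique: "(u, v) \<in> M \<Longrightarrow> (u, v') \<in> M \<Longrightarrow> v = v'"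
  using perfect unfolding is_perfect_matching_def by (metis fst_conv snd_conv)

lemma Sside_covered: "u \<in> Sside s t alpha alpha' beta beta' \<Longrightarrow> \<exists>v. (u, v) \<in> M"
  using perfect unfolding is_perfect_matching_def by blast

lemma Tside_covered: "v \<in> Tside s t alpha' beta \<Longrightarrow> \<exists>u. (u, v) \<in> M"
  using perfect unfolding is_perfect_matching_def by blast

lemma mem_L\<^sub>M_iff: "(i, j) \<in> L\<^sub>M \<longleftrightarrow> (\<exists>u. (u, VB j i) \<in> M \<and> is_main u (VB j i))"
  by (simp add: mmdc_of_matching_def Main_edges_def)

lemma L\<^sub>M_subset: "L\<^sub>M \<subseteq> {0..<s} \<times> {0..<t}"
proof (rule subrelI)
  fix i j assume "(i, j) \<in> L\<^sub>M"
  then obtain u where "(u, VB j i) \<in> M"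
    by (auto simp: mem_L\<^sub>M_iff)
  then show "(i, j) \<in> {0..<s} \<times> {0..<t}"
    using edge_in_G[of u "VB j i"] by simp
qed

lemma VA_matched_main:
  assumes "i < s" "k < alpha i"
  obtains j where "(VA i k, VB j i) \<in> M"
proof -
  obtain v where v: "(VA i k, v) \<in> M"
    using Sside_covered assms by fastforce
  with edge_in_G adj_VA_imp show thesis
    using that by blast
qed

lemma alpha_le_card_row:
  assumes "i < s"
  shows "alpha i \<le> card {j. (i, j) \<in> L\<^sub>M}"
proof -
  let ?R = "{(k, j). (VA i k, VB j i) \<in> M}"
  have "card {..<alpha i} \<le> card {j. (i, j) \<in> L\<^sub>M}"
  proof (rule card_le_card_if_left_unique[where R = ?R])
    show "finite {j. (i, j) \<in> L\<^sub>M}"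
      by (rule finite_subset[of _ "{..<t}"]) (use L\<^sub>M_subset in auto)
    show "\<exists>j\<in>{j. (i, j) \<in> L\<^sub>M}. (k, j) \<in> ?R" if "k \<in> {..<alpha i}" for k
    proof -
      from that obtain j where edge: "(VA i k, VB j i) \<in> M"
        using VA_matched_main[OF assms] by auto
      then have "(i, j) \<in> L\<^sub>M"
        unfolding mem_L\<^sub>M_iff by (intro exI[of _ "VA i k"]) simp
      with edge show ?thesis
        by blast
    qed
    show "k = k'" if "(k, j) \<in> ?R" "(k', j) \<in> ?R" for k k' j
      using that left_unique[of "VA i k" "VB j i" "VA i k'"] by simp
  qed
  then show ?thesis
    by simp
qed

lemma card_row_le_alpha':
  assumes "i < s" "alpha i \<le> alpha' i"
  shows "card {j. (i, j) \<in> L\<^sub>M} \<le> alpha' i"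
proof -
  let ?A = "VA i ` {..<alpha i} \<union> VA' i ` {..<alpha' i - alpha i}"
  let ?R = "{(j, u). (u, VB j i) \<in> M \<and> is_main u (VB j i)}"
  have "card {j. (i, j) \<in> L\<^sub>M} \<le> card ?A"
  proof (rule card_le_card_if_left_unique[where R = ?R])
    show "finite ?A"
      by simp
    show "\<exists>u\<in>?A. (j, u) \<in> ?R" if "j \<in> {j. (i, j) \<in> L\<^sub>M}" for j
      using that edge_in_G by (fastforce simp: mem_L\<^sub>M_iff is_main_VB_iff)
    show "j = j'" if "(j, u) \<in> ?R" "(j', u) \<in> ?R" for j j' u
      using that right_unique[of u "VB j i" "VB j' i"] by simp
  qed
  also have "card ?A = alpha' i"
    using assms by (subst card_two_blocks) (auto simp: inj_def)
  finally show ?thesis .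
qed

lemma VW_matched:
  assumes "j < t" "k < s - beta' j"
  obtains i where "(VW j k, VB j i) \<in> M"
proof -
  obtain v where v: "(VW j k, v) \<in> M"
    using Sside_covered assms by fastforce
  with edge_in_G adj_VW_imp show thesis
    using that by blast
qed

lemma not_main_imp_notin_L\<^sub>M:
  assumes "(u, VB j i) \<in> M" "\<not> is_main u (VB j i)"
  shows "(i, j) \<notin> L\<^sub>M"
  using assms left_unique by (auto simp: mem_L\<^sub>M_iff)

lemma card_unmatched_column_ge:
  assumes "j < t"
  shows "s - beta' j \<le> card {i. i < s \<and> (i, j) \<notin> L\<^sub>M}"
proof -
  let ?R = "{(k, i). (VW j k, VB j i) \<in> M}"
  have "card {..<s - beta' j} \<le> card {i. i < s \<and> (i, j) \<notin> L\<^sub>M}"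
  proof (rule card_le_card_if_left_unique[where R = ?R])
    show "finite {i. i < s \<and> (i, j) \<notin> L\<^sub>M}"
      by simp
    show "\<exists>i\<in>{i. i < s \<and> (i, j) \<notin> L\<^sub>M}. (k, i) \<in> ?R" if "k \<in> {..<s - beta' j}" for k
    proof -
      from that obtain i where edge: "(VW j k, VB j i) \<in> M"
        using VW_matched[OF assms] by auto
      then have "i < s"
        using edge_in_G[OF edge] by simp
      moreover have "(i, j) \<notin> L\<^sub>M"
        using not_main_imp_notin_L\<^sub>M[OF edge] by simp
      ultimately show ?thesis
        using edge by blast
    qed
    show "k = k'" if "(k, i) \<in> ?R" "(k', i) \<in> ?R" for k k' i
      using that left_unique[of "VW j k" "VB j i" "VW j k'"] by simp
  qed
  then show ?thesis
    by simp
qed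

lemma card_unmatched_column_le:
  assumes "j < t" "beta j \<le> beta' j" "beta' j \<le> s"
  shows "card {i. i < s \<and> (i, j) \<notin> L\<^sub>M} \<le> s - beta j"
proof -
  let ?WX = "VW j ` {..<s - beta' j} \<union> VX j ` {..<beta' j - beta j}"
  let ?R = "{(i, u). (u, VB j i) \<in> M}"
  have "card {i. i < s \<and> (i, j) \<notin> L\<^sub>M} \<le> card ?WX"
  proof (rule card_le_card_if_left_unique[where R = ?R])
    show "finite ?WX"
      by simp
    show "\<exists>u\<in>?WX. (i, u) \<in> ?R" if "i \<in> {i. i < s \<and> (i, j) \<notin> L\<^sub>M}" for i
    proof -
      from that assms(1) obtain u where edge: "(u, VB j i) \<in> M"
        using Tside_covered[of "VB j i"] by auto
      with that have "\<not> is_main u (VB j i)"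
        by (auto simp: mem_L\<^sub>M_iff)
      with edge_in_G[OF edge] obtain k where "u = VW j k \<or> u = VX j k"
        using adj_VB_not_main by blast
      with edge_in_G[OF edge] edge show ?thesis
        by auto
    qed
    show "i = i'" if "(i, u) \<in> ?R" "(i', u) \<in> ?R" for i i' u
      using that right_unique[of u "VB j i" "VB j i'"] by simp
  qed
  also have "card ?WX = s - beta j"
    using assms by (subst card_two_blocks) (auto simp: inj_def)
  finally show ?thesis .
qed

lemma card_column:
  "card {i. (i, j) \<in> L\<^sub>M} = s - card {i. i < s \<and> (i, j) \<notin> L\<^sub>M}"
proof -
  have column_subset: "{i. (i, j) \<in> L\<^sub>M} \<subseteq> {..<s}"
    using L\<^sub>M_subset by auto
  then have "{i. i < s \<and> (i, j) \<notin> L\<^sub>M} = {..<s} - {i. (i, j) \<in> L\<^sub>M}"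
    by auto
  with column_subset card_mono[OF _ column_subset] show ?thesis
    by (simp add: card_Diff_subset finite_subset)
qed

lemma is_mmdc_L\<^sub>M:
  assumes "\<forall>i<s. alpha i \<le> alpha' i" and "\<forall>j<t. beta j \<le> beta' j \<and> beta' j \<le> s"
  shows "is_mmdc s t alpha alpha' beta beta' L\<^sub>M"
proof -
  have "beta j \<le> card {i. (i, j) \<in> L\<^sub>M} \<and> card {i. (i, j) \<in> L\<^sub>M} \<le> beta' j" if "j < t" for j
    using card_unmatched_column_ge[OF that] card_unmatched_column_le[of j] card_column[of j]
      assms(2) that by auto
  then show ?thesis
    unfolding is_mmdc_def using L\<^sub>M_subset alpha_le_card_row card_row_le_alpha' assms(1) by blast
qed

end

theorem lemma4:
  fixes s t :: nat
    and delta :: "nat \<Rightarrow> nat \<Rightarrow> real"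
    and alpha alpha' beta beta' :: "nat \<Rightarrow> nat"
    and gamma1 gamma2 :: real
    and L :: "(nat \<times> nat) set"
    and M :: "(vert \<times> vert) set"
  assumes "\<forall>i<s. alpha i \<le> alpha' i"
    and "\<forall>j<t. beta j \<le> beta' j \<and> beta' j \<le> s"
    and "(\<Sum>i<s. alpha' i) > (\<Sum>j<t. beta j)"
    and "\<forall>i<s. \<forall>j<t. delta i j < gamma1"
    and "gamma1 < gamma2"
    and "is_min_weight_perfect_matching s t delta gamma1 gamma2 alpha alpha' beta beta' M"
    and "is_min_mmdc s t delta alpha alpha' beta beta' L"
  shows "mmdc_cost delta L \<le> Gweight delta gamma1 gamma2 (Main_edges M)"
proof -
  interpret G_perfect_matching s t alpha alpha' beta beta' M
    using assms(6) by unfold_locales (simp add: is_min_weight_perfect_matching_def)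
  have "mmdc_cost delta L \<le> mmdc_cost delta (mmdc_of_matching M)"
    using is_mmdc_L\<^sub>M[OF assms(1,2)] assms(7) by (simp add: is_min_mmdc_def)
  also have "\<dots> = Gweight delta gamma1 gamma2 (Main_edges M)"
    using mmdc_cost_mmdc_of_matching left_unique by blast
  finally show ?thesis .
qed

end
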